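(* Let $a,b>0$. (i) If $0\le v\le 1/2$ and $a\ge b$, then $L(a,b)\le \frac{1}{2}A_v(a,b)+\frac{1}{2}G_v(a,b)$. (ii) If $1/2\le v\le 1$ and $a\le b$, then $L(a,b)\le \frac{1}{2}A_v(a,b)+\frac{1}{2}G_v(a,b)$.
   Context: For $a,b>0$ and $0\le v\le 1$: $A_v(a,b):=(1-v)a+vb$, $G_v(a,b):=a^{1-v}b^v$, and the logarithmic mean $L(a,b):=\frac{a-b}{\log a-\log b}$ for $a\neq b$, $L(a,a):=a$. *)

theory Defs
  imports Complex_Main
begin

definition A_mean :: "real \<Rightarrow> real \<Rightarrow> real \<Rightarrow> real" where
  "A_mean v a b = (1 - v) * a + v * b"

definition G_mean :: "real \<Rightarrow> real \<Rightarrow> real \<Rightarrow> real" where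
  "G_mean v a b = a powr (1 - v) * b powr v"

definition L_mean :: "real \<Rightarrow> real \<Rightarrow> real" where
  "L_mean a b = (if a = b then a else (a - b) / (ln a - ln b))"

end

theory Submission
  imports Defs
begin

text \<open>
  For \<open>a \<ge> b\<close> and \<open>v \<le> 1/2\<close> both \<open>A_v\<close> and \<open>G_v\<close> dominate their values at \<open>v = 1/2\<close>,
  and the half-sum of the latter is \<open>((\<surd>a + \<surd>b)/2)\<^sup>2\<close>. This power mean of order \<open>1/2\<close> bounds
  \<open>L(a,b)\<close> from above: with \<open>x = \<surd>(a/b)\<close> the inequality is \<open>2(x - 1)/(x + 1) \<le> ln x\<close>.
  Part (ii) is part (i) with \<open>a, b\<close> swapped and \<open>v\<close> replaced by \<open>1 - v\<close>.
\<close>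

lemma ln_ge_two_mul_diff_div_add:
  fixes x :: real
  assumes "x \<ge> 1"
  shows "2 * (x - 1) / (x + 1) \<le> ln x"
proof -
  let ?f = "\<lambda>t::real. ln t - 2 * (t - 1) / (t + 1)"
  have "?f 1 \<le> ?f x"
  proof (rule DERIV_nonneg_imp_increasing_open[OF assms])
    fix t :: real
    assume t: "1 < t" "t < x"
    have "DERIV ?f t :> 1 / t - 4 / (t + 1)\<^sup>2"
      using t by (auto intro!: derivative_eq_intros simp: power2_eq_square field_simps)
    moreover have "4 * t \<le> (t + 1)\<^sup>2"
      using zero_le_power2[of "t - 1"] by (simp add: power2_eq_square algebra_simps)
    then have "4 / (t + 1)\<^sup>2 \<le> 1 / t"
      using t by (simp add: divide_simps)
    ultimately show "\<exists>y. DERIV ?f t :> y \<and> y \<ge> 0"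
      by auto
  next
    show "continuous_on {1..x} ?f"
      by (intro continuous_intros) auto
  qed
  then show ?thesis
    by simp
qed

lemma L_mean_commute: "L_mean a b = L_mean b a"
  by (simp add: L_mean_def) (simp add: divide_simps algebra_simps)

lemma L_mean_le_sqrt_mean_aux:
  fixes a b :: real
  assumes "0 < b" "b < a"
  shows "L_mean a b \<le> ((sqrt a + sqrt b) / 2)\<^sup>2"
proof -
  define p q where "p = sqrt a" and "q = sqrt b"
  then have a: "a = p\<^sup>2" and b: "b = q\<^sup>2" and q: "0 < q" and pq: "q < p"
    using assms by (auto simp: real_sqrt_less_iff)
  define x where "x = p / q"
  define r where "r = 2 * (x - 1) / (x + 1)"
  have x: "1 < x"
    using q pq by (simp add: x_def)
  then have r: "0 < r" "r \<le> ln x"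
    using ln_ge_two_mul_diff_div_add[of x] by (auto simp: r_def)
  have "ln a - ln b = 2 * ln x"
    using q pq by (simp add: a b x_def ln_div ln_realpow)
  then have "L_mean a b = (a - b) / (2 * ln x)"
    using assms by (simp add: L_mean_def)
  also have "\<dots> \<le> (a - b) / (2 * r)"
    using assms r by (intro divide_left_mono) auto
  also have "\<dots> = ((p + q) / 2)\<^sup>2"
    using q pq by (simp add: a b r_def x_def field_simps power2_eq_square)
  finally show ?thesis
    by (simp add: p_def q_def)
qed

lemma L_mean_le_sqrt_mean:
  fixes a b :: real
  assumes "0 < a" "0 < b"
  shows "L_mean a b \<le> ((sqrt a + sqrt b) / 2)\<^sup>2"
proof -
  consider "b < a" | "a < b" | "a = b"
    by linarith
  then show ?thesis
  proof cases
    case 1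
    with assms(2) show ?thesis
      by (rule L_mean_le_sqrt_mean_aux)
  next
    case 2
    with assms(1) have "L_mean b a \<le> ((sqrt b + sqrt a) / 2)\<^sup>2"
      by (rule L_mean_le_sqrt_mean_aux)
    then show ?thesis
      by (simp only: L_mean_commute[of a b] add.commute[of "sqrt a"])
  next
    case 3
    then show ?thesis
      using assms by (simp add: L_mean_def power2_eq_square)
  qed
qed

lemma A_mean_antimono:
  fixes a b v w :: real
  assumes "b \<le> a" "v \<le> w"
  shows "A_mean w a b \<le> A_mean v a b"
proof -
  have "A_mean v a b - A_mean w a b = (w - v) * (a - b)"
    by (simp add: A_mean_def algebra_simps)
  moreover have "0 \<le> (w - v) * (a - b)"
    using assms by simp
  ultimately show ?thesis
    by linarith
qed

lemma G_mean_antimono: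
  fixes a b v w :: real
  assumes "0 < b" "b \<le> a" "v \<le> w"
  shows "G_mean w a b \<le> G_mean v a b"
proof -
  have G_eq: "G_mean u a b = a * (b / a) powr u" for u
    using assms by (simp add: G_mean_def powr_diff powr_divide)
  have "(b / a) powr w \<le> (b / a) powr v"
    using assms by (intro powr_mono') auto
  then show ?thesis
    using assms by (simp add: G_eq)
qed

lemma sqrt_mean_eq_A_G_half:
  fixes a b :: real
  assumes "0 \<le> a" "0 \<le> b"
  shows "((sqrt a + sqrt b) / 2)\<^sup>2 = A_mean (1/2) a b / 2 + G_mean (1/2) a b / 2"
  using assms
  by (simp add: A_mean_def G_mean_def powr_half_sqrt power2_eq_square real_sqrt_mult algebra_simps)

lemma L_mean_le_A_G_mean:
  fixes a b v :: real
  assumes "0 < b" "b \<le> a" "v \<le> 1/2"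
  shows "L_mean a b \<le> A_mean v a b / 2 + G_mean v a b / 2"
proof -
  have "L_mean a b \<le> A_mean (1/2) a b / 2 + G_mean (1/2) a b / 2"
    using assms L_mean_le_sqrt_mean[of a b] sqrt_mean_eq_A_G_half[of a b] by simp
  moreover have "A_mean (1/2) a b \<le> A_mean v a b"
    using assms by (intro A_mean_antimono) auto
  moreover have "G_mean (1/2) a b \<le> G_mean v a b"
    using assms by (intro G_mean_antimono) auto
  ultimately show ?thesis
    by linarith
qed

lemma A_mean_swap: "A_mean (1 - v) b a = A_mean v a b"
  by (simp add: A_mean_def algebra_simps)

lemma G_mean_swap: "G_mean (1 - v) b a = G_mean v a b"
  by (simp add: G_mean_def algebra_simps)

theorem proposition3p1:
  fixes a b v :: real
  assumes "a > 0" and "b > 0"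
  shows "(0 \<le> v \<and> v \<le> 1/2 \<and> a \<ge> b \<longrightarrow>
            L_mean a b \<le> A_mean v a b / 2 + G_mean v a b / 2)
       \<and> (1/2 \<le> v \<and> v \<le> 1 \<and> a \<le> b \<longrightarrow>
            L_mean a b \<le> A_mean v a b / 2 + G_mean v a b / 2)"
proof safe
  assume "v \<le> 1/2" "a \<ge> b"
  with assms(2) show "L_mean a b \<le> A_mean v a b / 2 + G_mean v a b / 2"
    by (intro L_mean_le_A_G_mean) auto
next
  assume "1/2 \<le> v" "a \<le> b"
  with assms(1) have "L_mean b a \<le> A_mean (1 - v) b a / 2 + G_mean (1 - v) b a / 2"
    by (intro L_mean_le_A_G_mean) auto
  then show "L_mean a b \<le> A_mean v a b / 2 + G_mean v a b / 2"
    by (simp only: L_mean_commute[of a b] A_mean_swap G_mean_swap)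
qed

end
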